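(* Let $a, b, b'$ be complex numbers and $A>0$ such that $|b' - b| \le 1$ and $|a| e^{|b|} \le A$. Then $$\| Y(b) X(a) Y(-b) - Y(b') X(a) Y(-b') \| \le 10\, e^{A} |a|\, e^{|b|}\, |b' - b|.$$
   Context: For $U \in \mathfrak{sl}_2(\mathbb{C})$ and $t\in\mathbb{C}$, $U(t) = \exp(tU)$. $X = \begin{pmatrix} 1/2 & 0 \\ 0 & -1/2 \end{pmatrix}$, $\theta = \begin{pmatrix} 0 & -1/2 \\ 1/2 & 0\end{pmatrix}$, $Y = \exp(\tfrac{\pi}{2}\theta) X \exp(-\tfrac{\pi}{2}\theta)$. $\|\cdot\|$ is the operator norm on $M_2(\mathbb{C})$ with respect to the standard Hermitian norm. *)

theory Defs
  imports "HOL-Analysis.Analysis"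
begin

type_synonym cmat2 = "complex^2^2"

primrec mpow :: "cmat2 \<Rightarrow> nat \<Rightarrow> cmat2" where
  "mpow M 0 = mat 1"
| "mpow M (Suc n) = M ** mpow M n"

definition csmult :: "complex \<Rightarrow> cmat2 \<Rightarrow> cmat2" where
  "csmult c M = (\<chi> i j. c * M $ i $ j)"

definition mexp :: "cmat2 \<Rightarrow> cmat2" where
  "mexp M = (\<Sum>n. (1 / fact n :: real) *\<^sub>R mpow M n)"

definition flow :: "cmat2 \<Rightarrow> complex \<Rightarrow> cmat2" where
  "flow U t = mexp (csmult t U)"

definition opnorm :: "cmat2 \<Rightarrow> real" where
  "opnorm M = onorm (\<lambda>x::complex^2. M *v x)"

definition Xm :: cmat2 where
  "Xm = (\<chi> i j. if i = 1 \<and> j = 1 then 1/2 else if i = 2 \<and> j = 2 then -1/2 else 0)"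

definition thetam :: cmat2 where
  "thetam = (\<chi> i j. if i = 1 \<and> j = 2 then -1/2 else if i = 2 \<and> j = 1 then 1/2 else 0)"

definition Ym :: cmat2 where
  "Ym = mexp (csmult (pi/2) thetam) ** Xm ** mexp (csmult (-(pi/2)) thetam)"

end

(* Everything is explicit: X(a) = diag(e^(a/2), e^(-a/2)) = cosh(a/2) I + sinh(a/2) diag(1,-1),
   and Y = [[0,1/2],[1/2,0]], so Y(b) = [[cosh(b/2), sinh(b/2)],[sinh(b/2), cosh(b/2)]].
   Conjugating gives Y(b) X(a) Y(-b) = cosh(a/2) I + sinh(a/2) [[cosh b, -sinh b],[sinh b, -cosh b]],
   so the difference is sinh(a/2) times a matrix of differences of cosh and sinh at b and b'.
   Bounding the operator norm by the sum of the entries, with |sinh(a/2)| <= e^(|a|/2) |a|/2 and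
   |cosh b - cosh b'|, |sinh b - sinh b'| <= e e^|b| |b' - b| for |b' - b| <= 1, gives the
   constant 2e <= 10, and e^(|a|/2) <= e^A because |a| <= |a| e^|b| <= A. *)

theory Submission
  imports Defs
begin

lemma norm_exp_minus_1_le:
  fixes z :: "'a::{banach,real_normed_field}"
  shows "norm (exp z - 1) \<le> exp (norm z) * norm z"
  using Taylor_exp_field[of z 0] by simp

lemma norm_sinh_le:
  fixes z :: "'a::{banach,real_normed_field}"
  shows "norm (sinh z) \<le> exp (norm z) * norm z"
proof -
  have "sinh z = ((exp z - 1) - (exp (-z) - 1)) / 2"
    by (simp add: sinh_field_def)
  then have "norm (sinh z) = norm ((exp z - 1) - (exp (-z) - 1)) / 2"
    by (simp only: norm_divide) simp
  also have "\<dots> \<le> (norm (exp z - 1) + norm (exp (-z) - 1)) / 2"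
    by (intro divide_right_mono norm_triangle_ineq4) simp
  also have "\<dots> \<le> (exp (norm z) * norm z + exp (norm (-z)) * norm (-z)) / 2"
    by (intro divide_right_mono add_mono norm_exp_minus_1_le) simp
  finally show ?thesis by (simp add: mult.commute)
qed

lemma norm_exp_diff_le:
  fixes b b' :: "'a::{banach,real_normed_field}"
  assumes "norm (b' - b) \<le> 1"
  shows "norm (exp b' - exp b) \<le> exp 1 * exp (norm b) * norm (b' - b)"
proof -
  have "exp b' - exp b = exp b * (exp (b' - b) - 1)"
    by (simp add: exp_diff field_simps)
  then have "norm (exp b' - exp b) = norm (exp b) * norm (exp (b' - b) - 1)"
    by (metis norm_mult)
  also have "\<dots> \<le> exp (norm b) * (exp 1 * norm (b' - b))"
  proof (intro mult_mono norm_exp)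
    show "norm (exp (b' - b) - 1) \<le> exp 1 * norm (b' - b)"
      using norm_exp_minus_1_le[of "b' - b"] assms
      by (meson exp_le_cancel_iff mult_right_mono norm_ge_zero order_trans)
  qed simp_all
  finally show ?thesis by (simp add: algebra_simps)
qed

lemma norm_cosh_diff_le:
  fixes b b' :: "'a::{banach,real_normed_field}"
  assumes "norm (b' - b) \<le> 1"
  shows "norm (cosh b - cosh b') \<le> exp 1 * exp (norm b) * norm (b' - b)"
proof -
  have "cosh b - cosh b' = - ((exp b' - exp b) + (exp (-b') - exp (-b))) / 2"
    by (simp add: cosh_field_def field_simps)
  then have "norm (cosh b - cosh b') = norm ((exp b' - exp b) + (exp (-b') - exp (-b))) / 2"
    by (simp only: norm_divide norm_minus_cancel) simp
  also have "\<dots> \<le> (norm (exp b' - exp b) + norm (exp (-b') - exp (-b))) / 2"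
    by (intro divide_right_mono norm_triangle_ineq) simp
  also have "\<dots> \<le> (exp 1 * exp (norm b) * norm (b' - b) + exp 1 * exp (norm (-b)) * norm (-b' - -b)) / 2"
    using assms by (intro divide_right_mono add_mono norm_exp_diff_le) (simp_all add: norm_minus_commute)
  finally show ?thesis by (simp add: norm_minus_commute)
qed

lemma norm_sinh_diff_le:
  fixes b b' :: "'a::{banach,real_normed_field}"
  assumes "norm (b' - b) \<le> 1"
  shows "norm (sinh b - sinh b') \<le> exp 1 * exp (norm b) * norm (b' - b)"
proof -
  have "sinh b - sinh b' = - ((exp b' - exp b) - (exp (-b') - exp (-b))) / 2"
    by (simp add: sinh_field_def field_simps)
  then have "norm (sinh b - sinh b') = norm ((exp b' - exp b) - (exp (-b') - exp (-b))) / 2"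
    by (simp only: norm_divide norm_minus_cancel) simp
  also have "\<dots> \<le> (norm (exp b' - exp b) + norm (exp (-b') - exp (-b))) / 2"
    by (intro divide_right_mono norm_triangle_ineq4) simp
  also have "\<dots> \<le> (exp 1 * exp (norm b) * norm (b' - b) + exp 1 * exp (norm (-b)) * norm (-b' - -b)) / 2"
    using assms by (intro divide_right_mono add_mono norm_exp_diff_le) (simp_all add: norm_minus_commute)
  finally show ?thesis by (simp add: norm_minus_commute)
qed

lemma exp_sums_scaleR: "(\<lambda>n. (1 / fact n :: real) *\<^sub>R (z::complex) ^ n) sums exp z"
  using exp_converges[of z] by (simp add: divide_inverse_commute)

lemma cosh_sums_scaleR:
  "(\<lambda>n. (1 / fact n :: real) *\<^sub>R ((z ^ n + (-z) ^ n) / 2)) sums cosh (z::complex)"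
  using sums_divide[OF sums_add[OF exp_sums_scaleR[of z] exp_sums_scaleR[of "-z"]], of 2]
  by (simp add: cosh_field_def scaleR_conv_of_real field_simps)

lemma sinh_sums_scaleR:
  "(\<lambda>n. (1 / fact n :: real) *\<^sub>R ((z ^ n - (-z) ^ n) / 2)) sums sinh (z::complex)"
  using sums_divide[OF sums_diff[OF exp_sums_scaleR[of z] exp_sums_scaleR[of "-z"]], of 2]
  by (simp add: sinh_field_def scaleR_conv_of_real field_simps)

definition mat2 :: "complex \<Rightarrow> complex \<Rightarrow> complex \<Rightarrow> complex \<Rightarrow> cmat2" where
  "mat2 p q r s = (\<chi> i j. if i = 1 then (if j = 1 then p else q) else (if j = 1 then r else s))"

lemma mat2_nth [simp]:
  "mat2 p q r s $ 1 $ 1 = p" "mat2 p q r s $ 1 $ 2 = q" "mat2 p q r s $ 2 $ 1 = r" "mat2 p q r s $ 2 $ 2 = s"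
  by (simp_all add: mat2_def)

lemma mat2_eq_iff: "mat2 p q r s = mat2 p' q' r' s' \<longleftrightarrow> p = p' \<and> q = q' \<and> r = r' \<and> s = s'"
  by (metis mat2_nth)

lemma mat2_mult: "mat2 a b c d ** mat2 e f g h = mat2 (a*e + b*g) (a*f + b*h) (c*e + d*g) (c*f + d*h)"
  by (simp add: vec_eq_iff forall_2 mat2_def matrix_matrix_mult_def sum_2)

lemma mat2_diff: "mat2 a b c d - mat2 e f g h = mat2 (a - e) (b - f) (c - g) (d - h)"
  by (simp add: vec_eq_iff forall_2 mat2_def)

lemma scaleR_mat2: "x *\<^sub>R mat2 a b c d = mat2 (x *\<^sub>R a) (x *\<^sub>R b) (x *\<^sub>R c) (x *\<^sub>R d)"
  by (simp add: vec_eq_iff forall_2 mat2_def)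

lemma mat_1_mat2: "mat 1 = mat2 1 0 0 1"
  by (simp add: vec_eq_iff forall_2 mat2_def mat_def)

lemma csmult_mat2: "csmult x (mat2 a b c d) = mat2 (x*a) (x*b) (x*c) (x*d)"
  by (simp add: vec_eq_iff forall_2 mat2_def csmult_def)

lemma Xm_mat2: "Xm = mat2 (1/2) 0 0 (-1/2)"
  by (simp add: vec_eq_iff forall_2 mat2_def Xm_def)

lemma thetam_mat2: "thetam = mat2 0 (-1/2) (1/2) 0"
  by (simp add: vec_eq_iff forall_2 mat2_def thetam_def)

lemma sums_mat2:
  assumes "p sums p0" "q sums q0" "r sums r0" "s sums s0"
  shows "(\<lambda>n. mat2 (p n) (q n) (r n) (s n)) sums mat2 p0 q0 r0 s0"
  unfolding sums_def
proof (intro vec_tendstoI)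
  fix i j :: 2
  have "(\<lambda>n. mat2 (p n) (q n) (r n) (s n) $ i $ j) sums (mat2 p0 q0 r0 s0 $ i $ j)"
    using assms exhaust_2[of i] exhaust_2[of j] by auto
  then show "((\<lambda>N. (\<Sum>n<N. mat2 (p n) (q n) (r n) (s n)) $ i $ j) \<longlongrightarrow> mat2 p0 q0 r0 s0 $ i $ j) sequentially"
    by (simp add: sums_def sum_component)
qed

lemma mexp_eqI: "(\<lambda>n. (1 / fact n :: real) *\<^sub>R mpow M n) sums L \<Longrightarrow> mexp M = L"
  unfolding mexp_def by (rule sums_unique[symmetric])

lemma mpow_diag: "mpow (mat2 x 0 0 y) n = mat2 (x ^ n) 0 0 (y ^ n)"
  by (induction n) (simp_all add: mat_1_mat2 mat2_mult)

lemma mexp_diag: "mexp (mat2 x 0 0 y) = mat2 (exp x) 0 0 (exp y)"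
  by (rule mexp_eqI)
    (simp add: mpow_diag scaleR_mat2 sums_mat2 exp_sums_scaleR sums_zero)

lemma mpow_antidiag:
  assumes "u * v = 1"
  shows "mpow (mat2 0 (u * w) (v * w) 0) n =
    mat2 ((w^n + (-w)^n)/2) (u * ((w^n - (-w)^n)/2)) (v * ((w^n - (-w)^n)/2)) ((w^n + (-w)^n)/2)"
proof -
  from assms have "u \<noteq> 0" by auto
  moreover from this assms have v: "v = 1 / u" by (simp add: eq_divide_eq mult.commute)
  ultimately show ?thesis
    unfolding v by (induction n) (simp_all add: mat_1_mat2 mat2_mult mat2_eq_iff field_simps)
qed

lemma mexp_antidiag:
  assumes "u * v = 1"
  shows "mexp (mat2 0 (u * w) (v * w) 0) = mat2 (cosh w) (u * sinh w) (v * sinh w) (cosh w)"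
proof (rule mexp_eqI)
  have "(\<lambda>n. (1 / fact n :: real) *\<^sub>R (c * ((w^n - (-w)^n)/2))) sums (c * sinh w)" for c
    using sums_mult[OF sinh_sums_scaleR, of c] by (simp add: mult_scaleR_right)
  then show "(\<lambda>n. (1 / fact n :: real) *\<^sub>R mpow (mat2 0 (u * w) (v * w) 0) n) sums
      mat2 (cosh w) (u * sinh w) (v * sinh w) (cosh w)"
    unfolding mpow_antidiag[OF assms] scaleR_mat2 by (intro sums_mat2 cosh_sums_scaleR)
qed

lemma mexp_thetam: "mexp (csmult t thetam) = mat2 (cos (t/2)) (- sin (t/2)) (sin (t/2)) (cos (t/2))"
proof -
  define w where "w = \<i> * t / 2"
  have "csmult t thetam = mat2 0 (\<i> * w) (-\<i> * w) 0"
    by (simp add: thetam_mat2 csmult_mat2 w_def)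
  then have "mexp (csmult t thetam) = mat2 (cosh w) (\<i> * sinh w) (-\<i> * sinh w) (cosh w)"
    using mexp_antidiag[of \<i> "-\<i>" w] by simp
  then show ?thesis
    by (simp add: cosh_conv_cos sinh_conv_sin w_def)
qed

lemma Ym_mat2: "Ym = mat2 0 (1/2) (1/2) 0"
proof -
  define c where "c = complex_of_real (sqrt 2 / 2)"
  have "complex_of_real pi / 4 = of_real (pi/4)" by simp
  then have cos_sin: "cos (complex_of_real pi / 4) = c" "sin (complex_of_real pi / 4) = c"
    by (simp_all only: cos_of_real sin_of_real cos_45 sin_45 c_def)
  have "c * c = 1/2"
    by (simp add: c_def flip: of_real_mult)
  then show ?thesis
    by (simp add: Ym_def mexp_thetam cos_sin Xm_mat2 mat2_mult mat2_eq_iff field_simps)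
qed

lemma flow_Ym: "flow Ym b = mat2 (cosh (b/2)) (sinh (b/2)) (sinh (b/2)) (cosh (b/2))"
proof -
  have "csmult b Ym = mat2 0 (1 * (b/2)) (1 * (b/2)) 0"
    by (simp add: Ym_mat2 csmult_mat2)
  then show ?thesis
    unfolding flow_def using mexp_antidiag[of 1 1 "b/2"] by simp
qed

lemma flow_Xm: "flow Xm a = mat2 (exp (a/2)) 0 0 (exp (- (a/2)))"
  by (simp add: flow_def Xm_mat2 csmult_mat2 mexp_diag)

lemma flow_Ym_conj_flow_Xm:
  "flow Ym b ** flow Xm a ** flow Ym (-b) =
    mat2 (cosh (a/2) + sinh (a/2) * cosh b) (- sinh (a/2) * sinh b)
       (sinh (a/2) * sinh b) (cosh (a/2) - sinh (a/2) * cosh b)"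
proof -
  have "cosh b = cosh (b/2)^2 + sinh (b/2)^2" "sinh b = 2 * sinh (b/2) * cosh (b/2)"
    using cosh_double[of "b/2"] sinh_double[of "b/2"] by simp_all
  moreover have "cosh (-b/2) = cosh (b/2)" "sinh (-b/2) = - sinh (b/2)"
    by (simp_all flip: minus_divide_left)
  moreover have "cosh (b/2)^2 = sinh (b/2)^2 + 1"
    by (rule cosh_square_eq)
  moreover have "exp (a/2) = cosh (a/2) + sinh (a/2)" "exp (- (a/2)) = cosh (a/2) - sinh (a/2)"
    by (simp_all add: cosh_plus_sinh cosh_minus_sinh)
  ultimately show ?thesis
    unfolding flow_Ym flow_Xm mat2_mult mat2_eq_iff
    by algebra
qed

lemma opnorm_mat2_le: "opnorm (mat2 p q r s) \<le> norm p + norm q + norm r + norm s"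
  unfolding opnorm_def
proof (rule onorm_le)
  fix x :: "complex^2"
  have "norm (mat2 p q r s *v x) \<le> norm ((mat2 p q r s *v x)$1) + norm ((mat2 p q r s *v x)$2)"
    unfolding norm_vec_def by (rule order_trans[OF L2_set_le_sum]) (simp_all add: sum_2)
  also have "\<dots> = norm (p * x$1 + q * x$2) + norm (r * x$1 + s * x$2)"
    by (simp add: matrix_vector_mult_def sum_2)
  also have "\<dots> \<le> (norm p * norm (x$1) + norm q * norm (x$2)) + (norm r * norm (x$1) + norm s * norm (x$2))"
    by (intro add_mono order_trans[OF norm_triangle_ineq]) (simp_all add: norm_mult)
  also have "\<dots> \<le> (norm p * norm x + norm q * norm x) + (norm r * norm x + norm s * norm x)"
    by (intro add_mono mult_left_mono Finite_Cartesian_Product.norm_nth_le) simp_all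
  also have "\<dots> = (norm p + norm q + norm r + norm s) * norm x"
    by (simp add: algebra_simps)
  finally show "norm (mat2 p q r s *v x) \<le> (norm p + norm q + norm r + norm s) * norm x" .
qed

lemma opnorm_conj_flow_Xm_diff_le:
  "opnorm (flow Ym b ** flow Xm a ** flow Ym (-b) - flow Ym b' ** flow Xm a ** flow Ym (-b'))
    \<le> 2 * norm (sinh (a/2)) * (norm (cosh b - cosh b') + norm (sinh b - sinh b'))"
proof -
  let ?S = "sinh (a/2)" and ?dc = "cosh b - cosh b'" and ?ds = "sinh b - sinh b'"
  have eq: "flow Ym b ** flow Xm a ** flow Ym (-b) - flow Ym b' ** flow Xm a ** flow Ym (-b')
      = mat2 (?S * ?dc) (- (?S * ?ds)) (?S * ?ds) (- (?S * ?dc))"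
    unfolding flow_Ym_conj_flow_Xm mat2_diff mat2_eq_iff by (simp add: algebra_simps)
  have "opnorm (mat2 (?S * ?dc) (- (?S * ?ds)) (?S * ?ds) (- (?S * ?dc)))
      \<le> norm (?S * ?dc) + norm (- (?S * ?ds)) + norm (?S * ?ds) + norm (- (?S * ?dc))"
    by (rule opnorm_mat2_le)
  also have "\<dots> = 2 * norm ?S * (norm ?dc + norm ?ds)"
    by (simp only: norm_mult norm_minus_cancel) algebra
  finally show ?thesis
    unfolding eq .
qed

theorem lemmaA5:
  fixes a b b' :: complex and A :: real
  assumes "A > 0" and "cmod (b' - b) \<le> 1" and "cmod a * exp (cmod b) \<le> A"
  shows "opnorm (flow Ym b ** flow Xm a ** flow Ym (-b) - flow Ym b' ** flow Xm a ** flow Ym (-b'))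
         \<le> 10 * exp A * cmod a * exp (cmod b) * cmod (b' - b)"
proof -
  let ?D = "exp 1 * exp (cmod b) * cmod (b' - b)"
  have sinh_le: "cmod (sinh (a/2)) \<le> exp (cmod a / 2) * (cmod a / 2)"
    using norm_sinh_le[of "a/2"] by (simp add: norm_divide)
  have "opnorm (flow Ym b ** flow Xm a ** flow Ym (-b) - flow Ym b' ** flow Xm a ** flow Ym (-b'))
      \<le> 2 * cmod (sinh (a/2)) * (cmod (cosh b - cosh b') + cmod (sinh b - sinh b'))"
    by (rule opnorm_conj_flow_Xm_diff_le)
  also have "\<dots> \<le> 2 * (exp (cmod a / 2) * (cmod a / 2)) * (?D + ?D)"
    using sinh_le norm_cosh_diff_le[OF assms(2)] norm_sinh_diff_le[OF assms(2)]
    by (intro mult_mono add_mono) simp_all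
  also have "\<dots> = 2 * exp 1 * exp (cmod a / 2) * (cmod a * exp (cmod b) * cmod (b' - b))"
    by (simp add: algebra_simps)
  also have "\<dots> \<le> 10 * exp A * (cmod a * exp (cmod b) * cmod (b' - b))"
  proof (intro mult_right_mono mult_mono)
    have "cmod a \<le> cmod a * exp (cmod b)"
      by (simp add: mult_le_cancel_left1)
    with assms show "exp (cmod a / 2) \<le> exp A"
      by simp
    show "2 * exp 1 \<le> (10::real)"
      using exp_le by simp
  qed simp_all
  finally show ?thesis
    by (simp add: mult.assoc)
qed

end
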